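(* Let $(M,g)$ be a closed Riemannian manifold of dimension $d\in\{2,3\}$ and $Q\subseteq M$ finite with $N=\#Q$. Assume: (a) for every $q\in Q$, $\gamma\in(0,1)$ and $\varepsilon>0$ there is $\Lambda>1$ with $\big|\sum_{X<\lambda\le X+\gamma}Z_\lambda^q(q)-\frac{\mathrm{vol}(B^d)}{(2\pi)^d}d\gamma X^{d-1}\big|\le\varepsilon\gamma X^{d-1}$ for all $X\ge\Lambda$; (b) for every $\gamma>0$ and $\varepsilon>0$ there is $\Lambda_{\gamma,\varepsilon}>1$ with $|Z(q,p;X+\gamma)-Z(q,p;X)|\le\varepsilon\gamma X^{d-1}$ for all $p\ne q$ in $Q$ and $X\ge\Lambda_{\gamma,\varepsilon}$. Then there exist $\varepsilon>0$ and $C>0$ such that for every $\gamma\in(0,1)$ there is $\Lambda_{\gamma,\varepsilon}>1$ with, for every $\beta=(\beta_q)\in\mathbb{C}^N$, $$\varepsilon\gamma\Big[\sum_{q\in Q}|\beta_q|^2\Big]X^{d-1}\le\sum_{X<\lambda\le X+\gamma}\Big\|\sum_{q\in Q}\beta_qZ_\lambda^q\Big\|_{L^2(M)}^2\le C\gamma\Big[\sum_{q\in Q}|\beta_q|^2\Big]X^{d-1}\qquad\forall X\ge\Lambda_{\gamma,\varepsilon}.$$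
   Context: $\Delta$ is the positive Laplace–Beltrami operator; sums over $\lambda$ run over $\mathrm{Spec}(\sqrt\Delta)$; $Z_\lambda^q$ is the unique element of $\ker(\sqrt\Delta-\lambda)$ with $u(q)=\langle Z_\lambda^q,u\rangle_{L^2}$ on that eigenspace; $Z(q,p;X)=\sum_{\lambda\le X}Z_\lambda^q(p)$. $B^d$ is the unit ball of $\mathbb{R}^d$. *)

theory Defs
  imports "HOL-Analysis.Analysis"
begin

text \<open>The manifold is the measure space mu (Riemannian volume); S is the spectrum of
  sqrt Delta; E lam is the eigenspace ker(sqrt Delta - lam), a space of
  complex-valued square-integrable functions; Zk lam q is the reproducing
  element of E lam at the point q.\<close>

definition l2_inner :: "'m measure \<Rightarrow> ('m \<Rightarrow> complex) \<Rightarrow> ('m \<Rightarrow> complex) \<Rightarrow> complex" where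
  "l2_inner mu f g = (\<integral>x. cnj (f x) * g x \<partial>mu)"

definition l2_norm_sq :: "'m measure \<Rightarrow> ('m \<Rightarrow> complex) \<Rightarrow> real" where
  "l2_norm_sq mu f = (\<integral>x. (cmod (f x))\<^sup>2 \<partial>mu)"

definition square_integrable :: "'m measure \<Rightarrow> ('m \<Rightarrow> complex) \<Rightarrow> bool" where
  "square_integrable mu f \<longleftrightarrow> f \<in> borel_measurable mu \<and> integrable mu (\<lambda>x. (cmod (f x))\<^sup>2)"

definition spectral_data ::
  "'m measure \<Rightarrow> real set \<Rightarrow> (real \<Rightarrow> ('m \<Rightarrow> complex) set) \<Rightarrow> (real \<Rightarrow> 'm \<Rightarrow> 'm \<Rightarrow> complex) \<Rightarrow> bool" where
  "spectral_data mu S E Zk \<longleftrightarrow>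
     finite_measure mu \<and>
     S \<subseteq> {0..} \<and> (\<forall>X. finite (S \<inter> {..X})) \<and>
     (\<forall>lam\<in>S.
        E lam \<subseteq> {f. square_integrable mu f} \<and>
        (\<lambda>x. 0) \<in> E lam \<and>
        (\<forall>f\<in>E lam. \<forall>g\<in>E lam. (\<lambda>x. f x + g x) \<in> E lam) \<and>
        (\<forall>c. \<forall>f\<in>E lam. (\<lambda>x. c * f x) \<in> E lam) \<and>
        (\<exists>f\<in>E lam. \<exists>x\<in>space mu. f x \<noteq> 0) \<and>
        (\<forall>q\<in>space mu. Zk lam q \<in> E lam \<and>
            (\<forall>u\<in>E lam. u q = l2_inner mu (Zk lam q) u)))"

definition Zcount :: "real set \<Rightarrow> (real \<Rightarrow> 'm \<Rightarrow> 'm \<Rightarrow> complex) \<Rightarrow> 'm \<Rightarrow> 'm \<Rightarrow> real \<Rightarrow> complex" where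
  "Zcount S Zk q p X = (\<Sum>lam\<in>{lam\<in>S. lam \<le> X}. Zk lam q p)"

definition window :: "real set \<Rightarrow> real \<Rightarrow> real \<Rightarrow> real set" where
  "window S X gamma = {lam\<in>S. X < lam \<and> lam \<le> X + gamma}"

end

theory Submission
  imports Defs
begin

text \<open>By the reproducing property, \<open>\<parallel>\<Sum>\<^sub>q \<beta>\<^sub>q Z\<^sub>\<lambda>\<^sup>q\<parallel>\<^sup>2 = \<Sum>\<^sub>q \<Sum>\<^sub>p conj(\<beta>\<^sub>q) \<beta>\<^sub>p Z\<^sub>\<lambda>\<^sup>p(q)\<close>.
  Summed over the window \<open>(X, X + \<gamma>]\<close> this is a sesquilinear form in \<open>\<beta>\<close> with matrix
  entries \<open>Z(p, q; X + \<gamma>) - Z(p, q; X)\<close>. By (a) the diagonal entries are within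
  \<open>\<epsilon> \<gamma> X^(d-1)\<close> of \<open>c \<gamma> X^(d-1)\<close>, where \<open>c = d vol(B^d) / (2\<pi>)^d > 0\<close>, and by (b) the
  off-diagonal entries are at most \<open>\<epsilon> \<gamma> X^(d-1)\<close>. By Cauchy-Schwarz the form then differs
  from \<open>c \<gamma> X^(d-1) \<Sum>\<^sub>q |\<beta>\<^sub>q|\<^sup>2\<close> by at most \<open>N \<epsilon> \<gamma> X^(d-1) \<Sum>\<^sub>q |\<beta>\<^sub>q|\<^sup>2\<close>, which is at most half
  of it once \<open>\<epsilon> = c / (2(N + 1))\<close>.\<close>

lemma norm_sesquilinear_form_le:
  fixes H :: "'a \<Rightarrow> 'a \<Rightarrow> complex" and beta :: "'a \<Rightarrow> complex"
  assumes Q: "finite Q" and H: "\<And>p q. p \<in> Q \<Longrightarrow> q \<in> Q \<Longrightarrow> cmod (H p q) \<le> e"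
  shows "cmod (\<Sum>q\<in>Q. \<Sum>p\<in>Q. cnj (beta q) * beta p * H p q)
         \<le> e * real (card Q) * (\<Sum>q\<in>Q. (cmod (beta q))\<^sup>2)"
proof (cases "Q = {}")
  case False
  then have e: "e \<ge> 0" using H norm_ge_zero order_trans by blast
  have "cmod (\<Sum>q\<in>Q. \<Sum>p\<in>Q. cnj (beta q) * beta p * H p q)
      \<le> (\<Sum>q\<in>Q. \<Sum>p\<in>Q. cmod (beta q) * cmod (beta p) * e)"
    by (intro order_trans[OF norm_sum sum_mono] order_trans[OF norm_sum sum_mono])
       (auto simp: norm_mult intro!: mult_left_mono H)
  also have "\<dots> = e * (\<Sum>q\<in>Q. cmod (beta q))\<^sup>2"
    by (simp add: power2_eq_square sum_product sum_distrib_left mult_ac)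
  also have "\<dots> \<le> e * ((\<Sum>q\<in>Q. (cmod (beta q))\<^sup>2) * real (card Q))"
    using e by (intro mult_left_mono sum_squared_le_sum_of_squares)
  finally show ?thesis by (simp add: mult_ac)
qed simp

lemma norm_sesquilinear_form_minus_scalar_le:
  fixes G :: "'a \<Rightarrow> 'a \<Rightarrow> complex" and beta :: "'a \<Rightarrow> complex"
  assumes Q: "finite Q"
    and diag: "\<And>q. q \<in> Q \<Longrightarrow> cmod (G q q - complex_of_real A) \<le> e"
    and off: "\<And>p q. p \<in> Q \<Longrightarrow> q \<in> Q \<Longrightarrow> p \<noteq> q \<Longrightarrow> cmod (G p q) \<le> e"
  shows "cmod ((\<Sum>q\<in>Q. \<Sum>p\<in>Q. cnj (beta q) * beta p * G p q)
            - complex_of_real (A * (\<Sum>q\<in>Q. (cmod (beta q))\<^sup>2)))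
         \<le> e * real (card Q) * (\<Sum>q\<in>Q. (cmod (beta q))\<^sup>2)"
proof -
  define H where "H p q = G p q - (if p = q then complex_of_real A else 0)" for p q
  have "(\<Sum>q\<in>Q. \<Sum>p\<in>Q. cnj (beta q) * beta p * (if p = q then complex_of_real A else 0))
      = complex_of_real (A * (\<Sum>q\<in>Q. (cmod (beta q))\<^sup>2))"
    using Q by (simp add: if_distrib[of "times _"] sum_distrib_left complex_norm_square mult_ac
        cong: if_cong del: of_real_power)
  then have "(\<Sum>q\<in>Q. \<Sum>p\<in>Q. cnj (beta q) * beta p * G p q)
      - complex_of_real (A * (\<Sum>q\<in>Q. (cmod (beta q))\<^sup>2))
      = (\<Sum>q\<in>Q. \<Sum>p\<in>Q. cnj (beta q) * beta p * H p q)"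
    by (simp add: H_def right_diff_distrib sum_subtractf)
  also have "cmod \<dots> \<le> e * real (card Q) * (\<Sum>q\<in>Q. (cmod (beta q))\<^sup>2)"
    using Q by (rule norm_sesquilinear_form_le) (auto simp: H_def diag off)
  finally show ?thesis .
qed

lemma square_integrable_integrable_cnj_mult:
  assumes f: "square_integrable mu f" and g: "square_integrable mu g"
  shows "integrable mu (\<lambda>x. cnj (f x) * g x)"
proof (rule Bochner_Integration.integrable_bound)
  show "integrable mu (\<lambda>x. (cmod (f x))\<^sup>2 + (cmod (g x))\<^sup>2)"
    using f g unfolding square_integrable_def by auto
  have "f \<in> borel_measurable mu" and "g \<in> borel_measurable mu"
    using f g unfolding square_integrable_def by auto
  then show "(\<lambda>x. cnj (f x) * g x) \<in> borel_measurable mu"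
    by (intro borel_measurable_times borel_measurable_continuous_on[where f = cnj]
        continuous_intros)
  show "AE x in mu. norm (cnj (f x) * g x) \<le> norm ((cmod (f x))\<^sup>2 + (cmod (g x))\<^sup>2)"
  proof (rule AE_I2)
    fix x
    have "cmod (f x) * cmod (g x) \<le> (cmod (f x))\<^sup>2 + (cmod (g x))\<^sup>2"
      using sum_squares_bound[of "cmod (f x)" "cmod (g x)"]
        mult_nonneg_nonneg[OF norm_ge_zero norm_ge_zero, of "f x" "g x"] by linarith
    then show "norm (cnj (f x) * g x) \<le> norm ((cmod (f x))\<^sup>2 + (cmod (g x))\<^sup>2)"
      by (simp add: norm_mult)
  qed
qed

lemma l2_inner_self: "l2_inner mu f f = complex_of_real (l2_norm_sq mu f)"
proof -
  have "(\<lambda>x. cnj (f x) * f x) = (\<lambda>x. complex_of_real ((cmod (f x))\<^sup>2))"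
    by (simp add: complex_norm_square mult.commute del: of_real_power)
  then show ?thesis
    unfolding l2_inner_def l2_norm_sq_def by (simp only: integral_complex_of_real)
qed

lemma spectral_data_square_integrable:
  "spectral_data mu S E Zk \<Longrightarrow> lam \<in> S \<Longrightarrow> u \<in> E lam \<Longrightarrow> square_integrable mu u"
  unfolding spectral_data_def by blast

lemma spectral_data_kernel_in_eigenspace:
  "spectral_data mu S E Zk \<Longrightarrow> lam \<in> S \<Longrightarrow> q \<in> space mu \<Longrightarrow> Zk lam q \<in> E lam"
  unfolding spectral_data_def by blast

lemma spectral_data_reproducing:
  "spectral_data mu S E Zk \<Longrightarrow> lam \<in> S \<Longrightarrow> q \<in> space mu \<Longrightarrow> u \<in> E lam \<Longrightarrow>
    l2_inner mu (Zk lam q) u = u q"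
  unfolding spectral_data_def by metis

lemma spectral_data_kernel_combination_in_eigenspace:
  assumes sd: "spectral_data mu S E Zk" and lam: "lam \<in> S" and F: "finite F" "F \<subseteq> space mu"
  shows "(\<lambda>x. \<Sum>q\<in>F. beta q * Zk lam q x) \<in> E lam"
  using F
proof (induction F rule: finite_induct)
  case empty
  then show ?case using sd lam unfolding spectral_data_def by simp
next
  case (insert q F)
  have "(\<lambda>x. beta q * Zk lam q x) \<in> E lam"
    using sd lam spectral_data_kernel_in_eigenspace[OF sd lam, of q] insert.prems
    unfolding spectral_data_def by blast
  with insert have "(\<lambda>x. beta q * Zk lam q x + (\<Sum>q\<in>F. beta q * Zk lam q x)) \<in> E lam"
    using sd lam unfolding spectral_data_def by auto
  then show ?case using insert.hyps by simp
qed

lemma l2_inner_kernel_combination: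
  assumes sd: "spectral_data mu S E Zk" and lam: "lam \<in> S" and F: "finite F" "F \<subseteq> space mu"
    and u: "u \<in> E lam"
  shows "l2_inner mu (\<lambda>x. \<Sum>q\<in>F. beta q * Zk lam q x) u = (\<Sum>q\<in>F. cnj (beta q) * u q)"
proof -
  have "integrable mu (\<lambda>x. cnj (Zk lam q x) * u x)" if "q \<in> F" for q
    using that F
    by (intro square_integrable_integrable_cnj_mult spectral_data_square_integrable[OF sd lam u]
        spectral_data_square_integrable[OF sd lam spectral_data_kernel_in_eigenspace[OF sd lam]])
      auto
  then have "l2_inner mu (\<lambda>x. \<Sum>q\<in>F. beta q * Zk lam q x) u
      = (\<Sum>q\<in>F. cnj (beta q) * l2_inner mu (Zk lam q) u)"
    unfolding l2_inner_def
    by (simp add: sum_distrib_right mult.assoc Bochner_Integration.integral_sum)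
  also have "\<dots> = (\<Sum>q\<in>F. cnj (beta q) * u q)"
    using F by (intro sum.cong) (auto simp: spectral_data_reproducing[OF sd lam _ u])
  finally show ?thesis .
qed

lemma l2_norm_sq_kernel_combination:
  assumes sd: "spectral_data mu S E Zk" and lam: "lam \<in> S" and F: "finite F" "F \<subseteq> space mu"
  shows "complex_of_real (l2_norm_sq mu (\<lambda>x. \<Sum>q\<in>F. beta q * Zk lam q x))
       = (\<Sum>q\<in>F. \<Sum>p\<in>F. cnj (beta q) * beta p * Zk lam p q)"
  by (simp add: l2_inner_self[symmetric] sum_distrib_left mult.assoc
      l2_inner_kernel_combination[OF sd lam F spectral_data_kernel_combination_in_eigenspace[OF sd lam F]])

lemma sum_l2_norm_sq_kernel_combination_near_scalar:
  assumes sd: "spectral_data mu S E Zk" and Q: "finite Q" "Q \<subseteq> space mu" and W: "W \<subseteq> S"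
    and diag: "\<And>q. q \<in> Q \<Longrightarrow> cmod ((\<Sum>lam\<in>W. Zk lam q q) - complex_of_real A) \<le> e"
    and off: "\<And>p q. p \<in> Q \<Longrightarrow> q \<in> Q \<Longrightarrow> p \<noteq> q \<Longrightarrow> cmod (\<Sum>lam\<in>W. Zk lam p q) \<le> e"
  shows "\<bar>(\<Sum>lam\<in>W. l2_norm_sq mu (\<lambda>x. \<Sum>q\<in>Q. beta q * Zk lam q x))
            - A * (\<Sum>q\<in>Q. (cmod (beta q))\<^sup>2)\<bar>
         \<le> e * real (card Q) * (\<Sum>q\<in>Q. (cmod (beta q))\<^sup>2)"
proof -
  define T where "T = (\<Sum>lam\<in>W. l2_norm_sq mu (\<lambda>x. \<Sum>q\<in>Q. beta q * Zk lam q x))"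
  have "complex_of_real T = (\<Sum>lam\<in>W. \<Sum>q\<in>Q. \<Sum>p\<in>Q. cnj (beta q) * beta p * Zk lam p q)"
    unfolding T_def of_real_sum using W
    by (intro sum.cong[OF refl] l2_norm_sq_kernel_combination[OF sd _ Q]) auto
  also have "\<dots> = (\<Sum>q\<in>Q. \<Sum>p\<in>Q. cnj (beta q) * beta p * (\<Sum>lam\<in>W. Zk lam p q))"
    unfolding sum_distrib_left by (subst sum.swap) (simp add: sum.swap[of _ W])
  finally have T: "complex_of_real T
      = (\<Sum>q\<in>Q. \<Sum>p\<in>Q. cnj (beta q) * beta p * (\<Sum>lam\<in>W. Zk lam p q))" .
  have "cmod (complex_of_real (T - A * (\<Sum>q\<in>Q. (cmod (beta q))\<^sup>2)))
      \<le> e * real (card Q) * (\<Sum>q\<in>Q. (cmod (beta q))\<^sup>2)"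
    unfolding of_real_diff T by (rule norm_sesquilinear_form_minus_scalar_le[OF Q(1) diag off])
  then show ?thesis unfolding T_def norm_of_real .
qed

lemma sum_l2_norm_sq_kernel_combination_comparable:
  assumes sd: "spectral_data mu S E Zk" and Q: "finite Q" "Q \<subseteq> space mu" and W: "W \<subseteq> S"
    and diag: "\<And>q. q \<in> Q \<Longrightarrow> cmod ((\<Sum>lam\<in>W. Zk lam q q) - complex_of_real A) \<le> e"
    and off: "\<And>p q. p \<in> Q \<Longrightarrow> q \<in> Q \<Longrightarrow> p \<noteq> q \<Longrightarrow> cmod (\<Sum>lam\<in>W. Zk lam p q) \<le> e"
    and tolerance: "e * real (card Q) \<le> A / 2"
  shows "A / 2 * (\<Sum>q\<in>Q. (cmod (beta q))\<^sup>2)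
           \<le> (\<Sum>lam\<in>W. l2_norm_sq mu (\<lambda>x. \<Sum>q\<in>Q. beta q * Zk lam q x))
         \<and> (\<Sum>lam\<in>W. l2_norm_sq mu (\<lambda>x. \<Sum>q\<in>Q. beta q * Zk lam q x))
           \<le> 3 / 2 * A * (\<Sum>q\<in>Q. (cmod (beta q))\<^sup>2)"
proof -
  define B where "B = (\<Sum>q\<in>Q. (cmod (beta q))\<^sup>2)"
  define T where "T = (\<Sum>lam\<in>W. l2_norm_sq mu (\<lambda>x. \<Sum>q\<in>Q. beta q * Zk lam q x))"
  have "\<bar>T - A * B\<bar> \<le> e * real (card Q) * B"
    unfolding T_def B_def by (rule sum_l2_norm_sq_kernel_combination_near_scalar[OF sd Q W diag off])
  also have "\<dots> \<le> A / 2 * B"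
    using tolerance by (rule mult_right_mono) (simp add: B_def sum_nonneg)
  finally have "\<bar>T - A * B\<bar> \<le> A * B / 2" by simp
  moreover have "A / 2 * B = A * B / 2" and "3 / 2 * A * B = 3 * (A * B) / 2" by simp_all
  ultimately show ?thesis unfolding T_def[symmetric] B_def[symmetric] abs_le_iff by linarith
qed

lemma sum_window_eq_Zcount_diff:
  assumes sd: "spectral_data mu S E Zk" and gamma: "gamma \<ge> 0"
  shows "(\<Sum>lam\<in>window S X gamma. Zk lam p q) = Zcount S Zk p q (X + gamma) - Zcount S Zk p q X"
proof -
  have fin: "finite {lam\<in>S. lam \<le> Y}" for Y
    using sd unfolding spectral_data_def by (simp add: Int_def atMost_def)
  have "{lam\<in>S. lam \<le> X + gamma} = window S X gamma \<union> {lam\<in>S. lam \<le> X}"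
    using gamma unfolding window_def by auto
  moreover have "finite (window S X gamma)"
    by (rule finite_subset[OF _ fin[of "X + gamma"]]) (auto simp: window_def)
  ultimately show ?thesis
    unfolding Zcount_def using fin by (simp add: sum.union_disjoint window_def disjoint_iff)
qed

lemma eventually_at_top_iff_ex_gt_one:
  "eventually P at_top \<longleftrightarrow> (\<exists>Lam>1. \<forall>X\<ge>Lam. P (X :: real))"
proof
  assume "eventually P at_top"
  then obtain N where "\<forall>X\<ge>N. P X" by (auto simp: eventually_at_top_linorder)
  then show "\<exists>Lam>1. \<forall>X\<ge>Lam. P X" by (intro exI[of _ "max N 2"]) auto
qed (auto simp: eventually_at_top_linorder)

theorem lemma3p6:
  fixes mu :: "'m measure" and S :: "real set" and E :: "real \<Rightarrow> ('m \<Rightarrow> complex) set"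
    and Zk :: "real \<Rightarrow> 'm \<Rightarrow> 'm \<Rightarrow> complex" and d :: nat and Q :: "'m set"
  assumes sd: "spectral_data mu S E Zk"
    and d: "d \<in> {2, 3}"
    and Q: "finite Q" "Q \<subseteq> space mu"
    and a: "\<And>q gamma eps. q \<in> Q \<Longrightarrow> 0 < gamma \<Longrightarrow> gamma < 1 \<Longrightarrow> eps > 0 \<Longrightarrow>
              \<exists>Lam>1. \<forall>X\<ge>Lam.
                cmod ((\<Sum>lam\<in>window S X gamma. Zk lam q q)
                      - complex_of_real (unit_ball_vol (real d) / (2 * pi) ^ d * real d * gamma * X ^ (d - 1)))
                \<le> eps * gamma * X ^ (d - 1)"
    and b: "\<And>gamma eps. gamma > 0 \<Longrightarrow> eps > 0 \<Longrightarrow>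
              \<exists>Lam>1. \<forall>p\<in>Q. \<forall>q\<in>Q. p \<noteq> q \<longrightarrow> (\<forall>X\<ge>Lam.
                cmod (Zcount S Zk q p (X + gamma) - Zcount S Zk q p X) \<le> eps * gamma * X ^ (d - 1))"
  shows "\<exists>eps>0. \<exists>C>0. \<forall>gamma. 0 < gamma \<and> gamma < 1 \<longrightarrow>
           (\<exists>Lam>1. \<forall>beta :: 'm \<Rightarrow> complex. \<forall>X\<ge>Lam.
              eps * gamma * (\<Sum>q\<in>Q. (cmod (beta q))\<^sup>2) * X ^ (d - 1)
                \<le> (\<Sum>lam\<in>window S X gamma. l2_norm_sq mu (\<lambda>x. \<Sum>q\<in>Q. beta q * Zk lam q x))
              \<and> (\<Sum>lam\<in>window S X gamma. l2_norm_sq mu (\<lambda>x. \<Sum>q\<in>Q. beta q * Zk lam q x))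
                \<le> C * gamma * (\<Sum>q\<in>Q. (cmod (beta q))\<^sup>2) * X ^ (d - 1))"
proof -
  define c where "c = unit_ball_vol (real d) / (2 * pi) ^ d * real d"
  have c: "c > 0" using d unfolding c_def by auto
  define e where "e = c / (2 * (real (card Q) + 1))"
  have e: "e > 0" using c by (simp add: e_def)
  have e_card: "e * real (card Q) \<le> c / 2"
    using c by (simp add: e_def field_simps)
  define B where "B beta = (\<Sum>q\<in>Q. (cmod (beta q))\<^sup>2)" for beta :: "'m \<Rightarrow> complex"
  define T where "T beta X gamma =
      (\<Sum>lam\<in>window S X gamma. l2_norm_sq mu (\<lambda>x. \<Sum>q\<in>Q. beta q * Zk lam q x))" for beta X gamma
  have "\<exists>Lam>1. \<forall>beta. \<forall>X\<ge>Lam. c / 2 * gamma * B beta * X ^ (d - 1) \<le> T beta X gamma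
          \<and> T beta X gamma \<le> 3 / 2 * c * gamma * B beta * X ^ (d - 1)"
    if gamma: "0 < gamma" "gamma < 1" for gamma
  proof -
    have diag: "\<forall>\<^sub>F X in at_top. \<forall>q\<in>Q.
        cmod ((\<Sum>lam\<in>window S X gamma. Zk lam q q) - complex_of_real (c * gamma * X ^ (d - 1)))
          \<le> e * gamma * X ^ (d - 1)"
      using Q(1) by (rule eventually_ball_finite)
        (use a gamma e in \<open>auto simp: c_def eventually_at_top_iff_ex_gt_one\<close>)
    obtain Lb where "Lb > 1" and Lb: "\<forall>p\<in>Q. \<forall>q\<in>Q. p \<noteq> q \<longrightarrow> (\<forall>X\<ge>Lb.
        cmod (Zcount S Zk q p (X + gamma) - Zcount S Zk q p X) \<le> e * gamma * X ^ (d - 1))"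
      using b[OF gamma(1) e] by blast
    have off: "\<forall>\<^sub>F X in at_top. \<forall>p\<in>Q. \<forall>q\<in>Q. p \<noteq> q \<longrightarrow>
        cmod (\<Sum>lam\<in>window S X gamma. Zk lam p q) \<le> e * gamma * X ^ (d - 1)"
      unfolding eventually_at_top_iff_ex_gt_one using \<open>Lb > 1\<close> Lb gamma
      by (intro exI[of _ Lb]) (auto simp: sum_window_eq_Zcount_diff[OF sd])
    have "\<forall>\<^sub>F X in at_top. \<forall>beta. c / 2 * gamma * B beta * X ^ (d - 1) \<le> T beta X gamma
          \<and> T beta X gamma \<le> 3 / 2 * c * gamma * B beta * X ^ (d - 1)"
      using diag off eventually_gt_at_top[of 0]
    proof eventually_elim
      case (elim X)
      have "e * gamma * X ^ (d - 1) * real (card Q) \<le> c * gamma * X ^ (d - 1) / 2"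
        using mult_right_mono[OF e_card, of "gamma * X ^ (d - 1)"] gamma elim by (simp add: mult_ac)
      from sum_l2_norm_sq_kernel_combination_comparable[OF sd Q _ _ _ this, of "window S X gamma"]
      show ?case using elim by (auto simp: window_def T_def B_def mult_ac)
    qed
    then show ?thesis unfolding eventually_at_top_iff_ex_gt_one by blast
  qed
  moreover have "c / 2 > 0" and "3 / 2 * c > 0" using c by auto
  ultimately show ?thesis unfolding T_def B_def by blast
qed

end
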